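(* Let $P$ be a function-free program and $G$ a goal. If $EVR_L$ prunes every infinite SLD derivation of $G$ in $P$, independently of the selection rule used, then $EVR_L$ prunes every infinite RSLD derivation of $G$ in $P$.
   Context: Goals are finite lists of atoms; a clause is $h\leftarrow B$; a program is a finite set of clauses; function-free means no function symbols of positive arity occur. $N\subseteq_L G$ means $N$ is a subsequence of $G$, $G-N$ is the list of deleted atoms, $=_L$ is equality as lists. If $G=a_1,\dots,a_k$, $c=(h\leftarrow B)$, $\xi$ a renaming and $\theta$ an idempotent relevant mgu of $h\xi$ and some $a_i$, then $(a_1,\dots,a_{i-1},B\xi,a_{i+1},\dots,a_k)\theta$ is a resolvent. An SLD derivation of $G_0$ in $P$ is a finite or infinite sequence $G_0\xrightarrow{c_0\xi_0,\theta_0}G_1\xrightarrow{c_1\xi_1,\theta_1}\cdots$ of such steps with $c_j\in P$ and $var(c_j\xi_j)\cap(var(G_0)\cup var(c_0\xi_0)\cup\dots\cup var(c_{j-1}\xi_{j-1}))=\emptyset$. Reduced goal: $G>>^{\tau}N$ up to variable set $X$ if (i) $N\subseteq_L G$, (ii) for each atom $b$ of $G-N$, $b\tau$ occurs in $N$, (iii) $x\tau=x$ for all $x\in var(N)\cup X$. RSLD derivation: $G_0>>^{\alpha_0}N_0\xrightarrow{c_0\xi_0,\theta_0}G_1>>^{\alpha_1}N_1\xrightarrow{c_1\xi_1,\theta_1}G_2\cdots$ where each $N_j\xrightarrow{c_j\xi_j,\theta_j}G_{j+1}$ is an SLD step with $c_j\in P$ and the standardisation-apart condition above, and $G_j>>^{\alpha_j}N_j$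 up to $var(G_0\theta_0\cdots\theta_{j-1})$. (An SLD derivation is the special case $N_j=G_j$.) $EVR_L$ check: an RSLD derivation is pruned by $EVR_L$ if there exist $0\le i<j$ and a renaming $\tau$ with $G_0\theta_0\cdots\theta_{j-1}=G_0\theta_0\cdots\theta_{i-1}\tau$ and $N_j=_L N_i\tau$. *)

theory Defs
  imports "HOL-Library.Sublist" "HOL-Library.Multiset"
begin

datatype ('f, 'v) trm = Var 'v | Fn 'f "('f, 'v) trm list"

datatype ('p, 'f, 'v) atm = Atm 'p "('f, 'v) trm list"

type_synonym ('p, 'f, 'v) goal = "('p, 'f, 'v) atm list"

type_synonym ('p, 'f, 'v) clause = "('p, 'f, 'v) atm \<times> ('p, 'f, 'v) atm list"

type_synonym ('f, 'v) subst = "'v \<Rightarrow> ('f, 'v) trm"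

fun vars_trm :: "('f, 'v) trm \<Rightarrow> 'v set" where
  "vars_trm (Var x) = {x}"
| "vars_trm (Fn f ts) = \<Union> (set (map vars_trm ts))"

fun vars_atm :: "('p, 'f, 'v) atm \<Rightarrow> 'v set" where
  "vars_atm (Atm p ts) = \<Union> (set (map vars_trm ts))"

definition vars_goal :: "('p, 'f, 'v) goal \<Rightarrow> 'v set" where
  "vars_goal G = \<Union> (set (map vars_atm G))"

definition vars_clause :: "('p, 'f, 'v) clause \<Rightarrow> 'v set" where
  "vars_clause c = vars_atm (fst c) \<union> vars_goal (snd c)"

fun ff_trm :: "('f, 'v) trm \<Rightarrow> bool" where
  "ff_trm (Var x) = True"
| "ff_trm (Fn f ts) = (ts = [])"

fun ff_atm :: "('p, 'f, 'v) atm \<Rightarrow> bool" where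
  "ff_atm (Atm p ts) = (\<forall>t \<in> set ts. ff_trm t)"

definition ff_goal :: "('p, 'f, 'v) goal \<Rightarrow> bool" where
  "ff_goal G = (\<forall>a \<in> set G. ff_atm a)"

definition ff_program :: "('p, 'f, 'v) clause set \<Rightarrow> bool" where
  "ff_program P = (\<forall>c \<in> P. ff_atm (fst c) \<and> ff_goal (snd c))"

fun subst_trm :: "('f, 'v) subst \<Rightarrow> ('f, 'v) trm \<Rightarrow> ('f, 'v) trm" where
  "subst_trm \<sigma> (Var x) = \<sigma> x"
| "subst_trm \<sigma> (Fn f ts) = Fn f (map (subst_trm \<sigma>) ts)"

fun subst_atm :: "('f, 'v) subst \<Rightarrow> ('p, 'f, 'v) atm \<Rightarrow> ('p, 'f, 'v) atm" where
  "subst_atm \<sigma> (Atm p ts) = Atm p (map (subst_trm \<sigma>) ts)"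

definition subst_goal :: "('f, 'v) subst \<Rightarrow> ('p, 'f, 'v) goal \<Rightarrow> ('p, 'f, 'v) goal" where
  "subst_goal \<sigma> G = map (subst_atm \<sigma>) G"

definition subst_clause :: "('f, 'v) subst \<Rightarrow> ('p, 'f, 'v) clause \<Rightarrow> ('p, 'f, 'v) clause" where
  "subst_clause \<sigma> c = (subst_atm \<sigma> (fst c), subst_goal \<sigma> (snd c))"

text \<open>Composition: first \<sigma>, then \<tau> (written \<sigma>\<tau> in the paper).\<close>
definition subst_comp :: "('f, 'v) subst \<Rightarrow> ('f, 'v) subst \<Rightarrow> ('f, 'v) subst" where
  "subst_comp \<sigma> \<tau> = (\<lambda>x. subst_trm \<tau> (\<sigma> x))"

definition subst_dom :: "('f, 'v) subst \<Rightarrow> 'v set" where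
  "subst_dom \<sigma> = {x. \<sigma> x \<noteq> Var x}"

definition subst_range_vars :: "('f, 'v) subst \<Rightarrow> 'v set" where
  "subst_range_vars \<sigma> = (\<Union>x \<in> subst_dom \<sigma>. vars_trm (\<sigma> x))"

definition is_renaming :: "('f, 'v) subst \<Rightarrow> bool" where
  "is_renaming \<sigma> = (\<exists>f. bij f \<and> \<sigma> = (\<lambda>x. Var (f x)))"

definition idempotent :: "('f, 'v) subst \<Rightarrow> bool" where
  "idempotent \<theta> = (subst_comp \<theta> \<theta> = \<theta>)"

definition is_unifier :: "('f, 'v) subst \<Rightarrow> ('p, 'f, 'v) atm \<Rightarrow> ('p, 'f, 'v) atm \<Rightarrow> bool" where
  "is_unifier \<theta> a b = (subst_atm \<theta> a = subst_atm \<theta> b)"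

definition is_mgu :: "('f, 'v) subst \<Rightarrow> ('p, 'f, 'v) atm \<Rightarrow> ('p, 'f, 'v) atm \<Rightarrow> bool" where
  "is_mgu \<theta> a b = (is_unifier \<theta> a b \<and>
     (\<forall>\<sigma>. is_unifier \<sigma> a b \<longrightarrow> (\<exists>\<eta>. \<sigma> = subst_comp \<theta> \<eta>)))"

definition relevant :: "('f, 'v) subst \<Rightarrow> ('p, 'f, 'v) atm \<Rightarrow> ('p, 'f, 'v) atm \<Rightarrow> bool" where
  "relevant \<theta> a b = (subst_dom \<theta> \<union> subst_range_vars \<theta> \<subseteq> vars_atm a \<union> vars_atm b)"

text \<open>Iterated composition: comp_upto \<theta>s j = \<theta>_0 \<theta>_1 ... \<theta>_(j-1).\<close>
fun comp_upto :: "(nat \<Rightarrow> ('f, 'v) subst) \<Rightarrow> nat \<Rightarrow> ('f, 'v) subst" where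
  "comp_upto \<theta>s 0 = Var"
| "comp_upto \<theta>s (Suc j) = subst_comp (comp_upto \<theta>s j) (\<theta>s j)"

definition sld_step ::
  "('p, 'f, 'v) clause set \<Rightarrow> ('p, 'f, 'v) goal \<Rightarrow> ('p, 'f, 'v) clause \<Rightarrow>
   ('f, 'v) subst \<Rightarrow> ('f, 'v) subst \<Rightarrow> ('p, 'f, 'v) goal \<Rightarrow> bool" where
  "sld_step P N c \<xi> \<theta> G' =
     (c \<in> P \<and> is_renaming \<xi> \<and>
      (\<exists>i < length N. idempotent \<theta> \<and> relevant \<theta> (subst_atm \<xi> (fst c)) (N ! i) \<and>
          is_mgu \<theta> (subst_atm \<xi> (fst c)) (N ! i) \<and>
          G' = subst_goal \<theta> (take i N @ subst_goal \<xi> (snd c) @ drop (Suc i) N)))"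

definition standardised_apart ::
  "('p, 'f, 'v) goal \<Rightarrow> (nat \<Rightarrow> ('p, 'f, 'v) clause) \<Rightarrow> (nat \<Rightarrow> ('f, 'v) subst) \<Rightarrow> nat \<Rightarrow> bool" where
  "standardised_apart G0 cs \<xi>s j =
     (vars_clause (subst_clause (\<xi>s j) (cs j)) \<inter>
       (vars_goal G0 \<union> (\<Union>k<j. vars_clause (subst_clause (\<xi>s k) (cs k)))) = {})"

definition inf_sld_deriv ::
  "('p, 'f, 'v) clause set \<Rightarrow> ('p, 'f, 'v) goal \<Rightarrow> (nat \<Rightarrow> ('p, 'f, 'v) goal) \<Rightarrow>
   (nat \<Rightarrow> ('p, 'f, 'v) clause) \<Rightarrow> (nat \<Rightarrow> ('f, 'v) subst) \<Rightarrow> (nat \<Rightarrow> ('f, 'v) subst) \<Rightarrow> bool" where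
  "inf_sld_deriv P G0 Gs cs \<xi>s \<theta>s =
     (Gs 0 = G0 \<and>
      (\<forall>j. sld_step P (Gs j) (cs j) (\<xi>s j) (\<theta>s j) (Gs (Suc j)) \<and> standardised_apart G0 cs \<xi>s j))"

text \<open>G >>^\<tau> N up to X. The list G - N of deleted atoms is the multiset difference
  (well-defined since N is a subsequence of G).\<close>
definition reduced ::
  "('p, 'f, 'v) goal \<Rightarrow> ('f, 'v) subst \<Rightarrow> ('p, 'f, 'v) goal \<Rightarrow> 'v set \<Rightarrow> bool" where
  "reduced G \<tau> N X =
     (subseq N G \<and>
      (\<forall>b \<in># mset G - mset N. subst_atm \<tau> b \<in> set N) \<and>
      (\<forall>x \<in> vars_goal N \<union> X. \<tau> x = Var x))"

definition inf_rsld_deriv ::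
  "('p, 'f, 'v) clause set \<Rightarrow> ('p, 'f, 'v) goal \<Rightarrow> (nat \<Rightarrow> ('p, 'f, 'v) goal) \<Rightarrow>
   (nat \<Rightarrow> ('p, 'f, 'v) goal) \<Rightarrow> (nat \<Rightarrow> ('f, 'v) subst) \<Rightarrow>
   (nat \<Rightarrow> ('p, 'f, 'v) clause) \<Rightarrow> (nat \<Rightarrow> ('f, 'v) subst) \<Rightarrow> (nat \<Rightarrow> ('f, 'v) subst) \<Rightarrow> bool" where
  "inf_rsld_deriv P G0 Gs Ns \<alpha>s cs \<xi>s \<theta>s =
     (Gs 0 = G0 \<and>
      (\<forall>j. reduced (Gs j) (\<alpha>s j) (Ns j) (vars_goal (subst_goal (comp_upto \<theta>s j) G0)) \<and>
           sld_step P (Ns j) (cs j) (\<xi>s j) (\<theta>s j) (Gs (Suc j)) \<and>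
           standardised_apart G0 cs \<xi>s j))"

definition evr_pruned ::
  "('p, 'f, 'v) goal \<Rightarrow> (nat \<Rightarrow> ('f, 'v) subst) \<Rightarrow> (nat \<Rightarrow> ('p, 'f, 'v) goal) \<Rightarrow> bool" where
  "evr_pruned G0 \<theta>s Ns =
     (\<exists>i j \<tau>. i < j \<and> is_renaming \<tau> \<and>
        subst_goal (comp_upto \<theta>s j) G0 = subst_goal \<tau> (subst_goal (comp_upto \<theta>s i) G0) \<and>
        Ns j = subst_goal \<tau> (Ns i))"

end

theory Submission
  imports Defs "HOL-Combinatorics.Transposition"
begin

(* Call the pair (G \<theta>0 ... \<theta>(k-1), current goal) the state of a derivation after k steps, so
   that EVR_L prunes as soon as two states are variants.  As P and G are function-free, the states
   reachable by SLD steps, taken up to renaming, form a finitely branching graph.  Were it infinite,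
   Koenig's lemma would give an infinite path through pairwise non-variant states, i.e. an infinite
   SLD derivation that EVR_L does not prune; so it is finite.  An RSLD derivation is shadowed by an
   SLD derivation resolving the same atoms, whose goals contain the reduced goals as subsequences.
   Hence, up to renaming, the states of the RSLD derivation range over the finitely many pairs
   (A, N) with N a subsequence of the goal of a reachable state (A, H), and two of them are
   variants. *)

lemma bij_extend:
  fixes h :: "'a \<Rightarrow> 'a"
  assumes "finite S" and "inj_on h S"
  shows "\<exists>f. bij f \<and> (\<forall>x\<in>S. f x = h x)"
  using assms
proof (induction S rule: finite_induct)
  case empty
  show ?case
    using bij_id by blast
next
  case (insert a S)
  then obtain f where f: "bij f" "\<forall>x\<in>S. f x = h x"
    by (auto simp: inj_on_insert)
  define b where "b = inv f (h a)"
  have fb: "f b = h a"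
    using f(1) by (simp add: b_def bij_is_surj surj_f_inv_f)
  have "b \<notin> S"
  proof
    assume "b \<in> S"
    then have "h b = h a"
      using f(2) fb by simp
    then show False
      using insert.prems \<open>b \<in> S\<close> insert.hyps(2) by (auto simp: inj_on_def)
  qed
  then have "(f \<circ> transpose a b) x = h x" if "x \<in> insert a S" for x
    using that insert.hyps(2) f(2) fb by (auto simp: transpose_def)
  moreover have "bij (f \<circ> transpose a b)"
    using f(1) by (simp add: bij_comp)
  ultimately show ?case
    by blast
qed

lemma bij_extend_avoiding:
  fixes h :: "'a \<Rightarrow> 'a"
  assumes "infinite (UNIV :: 'a set)" and "finite V" and "finite W" and "V \<inter> W = {}"
    and "finite U" and "inj_on h V"
  shows "\<exists>\<pi>. bij \<pi> \<and> (\<forall>x\<in>V. \<pi> x = h x) \<and> \<pi> ` W \<inter> U = {}"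
proof -
  have "infinite (UNIV - (U \<union> h ` V))"
    using assms by (simp add: Diff_infinite_finite)
  then have "\<exists>B. finite B \<and> card B = card W \<and> B \<subseteq> UNIV - (U \<union> h ` V)"
    by (rule infinite_arbitrarily_large)
  then obtain B where B: "finite B" "card B = card W" "B \<subseteq> UNIV - (U \<union> h ` V)"
    by (elim exE conjE)
  obtain k where k: "bij_betw k W B"
    using finite_same_card_bij[OF assms(3) B(1) B(2)[symmetric]] by blast
  define g where "g x = (if x \<in> V then h x else k x)" for x
  have "inj_on g V"
    using assms(6) by (simp add: g_def inj_on_def)
  moreover have "inj_on g W"
    using k assms(4) by (auto simp: g_def inj_on_def bij_betw_def)
  moreover have "g ` (V - W) \<inter> g ` (W - V) = {}"
    using B(3) k assms(4) by (auto simp: g_def bij_betw_def)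
  ultimately have "inj_on g (V \<union> W)"
    by (simp add: inj_on_Un)
  then obtain \<pi> where \<pi>: "bij \<pi>" "\<forall>x\<in>V \<union> W. \<pi> x = g x"
    using bij_extend[of "V \<union> W" g] assms(2,3) by blast
  have "\<pi> ` W = k ` W"
    using \<pi>(2) assms(4) by (auto simp: g_def image_def)
  then have "\<pi> ` W \<inter> U = {}"
    using k B(3) by (auto simp: bij_betw_def)
  moreover have "\<forall>x\<in>V. \<pi> x = h x"
    using \<pi>(2) by (simp add: g_def)
  ultimately show ?thesis
    using \<pi>(1) by blast
qed

lemma koenig:
  assumes fin: "\<And>x. E\<^sup>*\<^sup>* r x \<Longrightarrow> finite {y. E x y}" and inf: "infinite {x. E\<^sup>*\<^sup>* r x}"
  shows "\<exists>f. f 0 = r \<and> (\<forall>k. E (f k) (f (Suc k)))"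
proof -
  define good where "good x \<longleftrightarrow> E\<^sup>*\<^sup>* r x \<and> infinite {y. E\<^sup>*\<^sup>* x y}" for x
  have "\<exists>z. good z \<and> E x z" if "good x" for x
  proof (rule ccontr)
    assume "\<nexists>z. good z \<and> E x z"
    moreover have "E\<^sup>*\<^sup>* r z" if "E x z" for z
      using that \<open>good x\<close> unfolding good_def by (metis rtranclp.rtrancl_into_rtrancl)
    ultimately have "finite {y. E\<^sup>*\<^sup>* z y}" if "E x z" for z
      using that unfolding good_def by blast
    moreover have "finite {z. E x z}"
      using fin \<open>good x\<close> by (simp add: good_def)
    moreover have "{y. E\<^sup>*\<^sup>* x y} \<subseteq> insert x (\<Union>z\<in>{z. E x z}. {y. E\<^sup>*\<^sup>* z y})"
      by (auto elim: converse_rtranclpE)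
    ultimately have "finite {y. E\<^sup>*\<^sup>* x y}"
      by (auto intro: finite_subset)
    then show False
      using \<open>good x\<close> by (simp add: good_def)
  qed
  moreover have "good r"
    using inf by (simp add: good_def)
  ultimately have "\<exists>f. \<forall>k. (good (f k) \<and> (k = 0 \<longrightarrow> f k = r)) \<and> E (f k) (f (Suc k))"
    by (intro dependent_nat_choice) auto
  then show ?thesis
    by blast
qed

lemma koenig_injective:
  assumes fin: "\<And>x. E\<^sup>*\<^sup>* r x \<Longrightarrow> finite {y. E x y}" and inf: "infinite {x. E\<^sup>*\<^sup>* r x}"
  shows "\<exists>f. f 0 = r \<and> (\<forall>k. E (f k) (f (Suc k))) \<and> inj f"
proof -
  define d where "d x = (LEAST n. (E ^^ n) r x)" for x
  define T where "T x y \<longleftrightarrow> E\<^sup>*\<^sup>* r x \<and> E x y \<and> d y = Suc (d x)" for x y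
  have d: "(E ^^ d x) r x" if "E\<^sup>*\<^sup>* r x" for x
    using that unfolding d_def rtranclp_power by (metis LeastI)
  have d_le: "d x \<le> n" if "(E ^^ n) r x" for x n
    using that unfolding d_def by (rule Least_le)
  have T_reach: "T\<^sup>*\<^sup>* r y" if "E\<^sup>*\<^sup>* r y" for y
    using that
  proof (induction "d y" arbitrary: y rule: less_induct)
    case less
    show ?case
    proof (cases "d y")
      case 0
      then show ?thesis
        using d[OF less.prems] by simp
    next
      case (Suc n)
      then obtain x where x: "(E ^^ n) r x" "E x y"
        using d[OF less.prems] by (auto elim: relpowp_Suc_E)
      then have "E\<^sup>*\<^sup>* r x"
        by (meson relpowp_imp_rtranclp)
      moreover have "d y \<le> Suc (d x)"
        using d_le d[OF \<open>E\<^sup>*\<^sup>* r x\<close>] x(2) by (meson relpowp_Suc_I)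
      ultimately have "d x = n" and "T x y"
        using d_le[OF x(1)] Suc x(2) by (auto simp: T_def)
      then show ?thesis
        using less.hyps[of x] Suc \<open>E\<^sup>*\<^sup>* r x\<close> by (simp add: rtranclp.rtrancl_into_rtrancl)
    qed
  qed
  have "finite {y. T x y}" if "T\<^sup>*\<^sup>* r x" for x
  proof -
    have "E\<^sup>*\<^sup>* r x"
      using that by (induction rule: rtranclp_induct) (auto simp: T_def)
    then show ?thesis
      using fin by (auto simp: T_def intro: finite_subset)
  qed
  moreover have "infinite {x. T\<^sup>*\<^sup>* r x}"
    using inf T_reach finite_subset[of "{x. E\<^sup>*\<^sup>* r x}" "{x. T\<^sup>*\<^sup>* r x}"] by blast
  ultimately obtain f where f0: "f 0 = r" and fT: "\<And>k. T (f k) (f (Suc k))"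
    using koenig[of T r] by blast
  have "d r = 0"
    using d_le[of 0 r] by simp
  then have "d (f k) = k" for k
    using f0 fT by (induction k) (auto simp: T_def)
  then have "inj f"
    by (metis injI)
  then show ?thesis
    using f0 fT by (auto simp: T_def)
qed

lemma subseq_nth_split:
  assumes "subseq xs ys" and "i < length xs"
  shows "\<exists>j<length ys. ys ! j = xs ! i \<and>
    subseq (take i xs) (take j ys) \<and> subseq (drop (Suc i) xs) (drop (Suc j) ys)"
  using assms
proof (induction arbitrary: i rule: list_emb.induct)
  case (list_emb_Nil ys)
  then show ?case
    by simp
next
  case (list_emb_Cons xs ys y)
  then obtain j where "j < length ys" "ys ! j = xs ! i" "subseq (take i xs) (take j ys)"
    "subseq (drop (Suc i) xs) (drop (Suc j) ys)"
    by blast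
  then show ?case
    by (intro exI[of _ "Suc j"]) auto
next
  case (list_emb_Cons2 x y xs ys)
  show ?case
  proof (cases i)
    case 0
    then show ?thesis
      using list_emb_Cons2 by (intro exI[of _ 0]) auto
  next
    case (Suc i')
    then obtain j where "j < length ys" "ys ! j = xs ! i'" "subseq (take i' xs) (take j ys)"
      "subseq (drop (Suc i') xs) (drop (Suc j) ys)"
      using list_emb_Cons2 by auto
    then show ?thesis
      using Suc list_emb_Cons2 by (intro exI[of _ "Suc j"]) auto
  qed
qed

lemma finite_range_repeats:
  fixes s :: "nat \<Rightarrow> 'a"
  assumes "finite (range s)"
  shows "\<exists>i j. i < j \<and> s i = s j"
proof -
  obtain i j where "i \<noteq> j" "s i = s j"
    using assms finite_imageD[of s UNIV] by (auto simp: inj_def)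
  then show ?thesis
    by (metis linorder_neqE_nat)
qed

definition ren :: "('v \<Rightarrow> 'v) \<Rightarrow> ('f, 'v) subst" where
  "ren f = (\<lambda>x. Var (f x))"

lemma is_renaming_iff: "is_renaming \<sigma> \<longleftrightarrow> (\<exists>f. bij f \<and> \<sigma> = ren f)"
  by (simp add: is_renaming_def ren_def)

lemma subst_trm_comp: "subst_trm \<tau> (subst_trm \<sigma> t) = subst_trm (subst_comp \<sigma> \<tau>) t"
  by (induction t) (auto simp: subst_comp_def)

lemma subst_atm_comp: "subst_atm \<tau> (subst_atm \<sigma> a) = subst_atm (subst_comp \<sigma> \<tau>) a"
  by (cases a) (auto simp: subst_trm_comp)

lemma subst_goal_comp: "subst_goal \<tau> (subst_goal \<sigma> G) = subst_goal (subst_comp \<sigma> \<tau>) G"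
  by (auto simp: subst_goal_def subst_atm_comp)

lemma subst_trm_Var [simp]: "subst_trm Var t = t"
  by (induction t) (auto simp: map_idI)

lemma subst_atm_Var [simp]: "subst_atm Var a = a"
  by (cases a) (auto intro: map_idI)

lemma subst_goal_Var [simp]: "subst_goal Var G = G"
  by (auto simp: subst_goal_def intro: map_idI)

lemma subst_trm_cong: "(\<And>x. x \<in> vars_trm t \<Longrightarrow> \<sigma> x = \<tau> x) \<Longrightarrow> subst_trm \<sigma> t = subst_trm \<tau> t"
  by (induction t) auto

lemma subst_atm_cong: "(\<And>x. x \<in> vars_atm a \<Longrightarrow> \<sigma> x = \<tau> x) \<Longrightarrow> subst_atm \<sigma> a = subst_atm \<tau> a"
  by (cases a) (auto intro: subst_trm_cong)

lemma subst_goal_cong: "(\<And>x. x \<in> vars_goal G \<Longrightarrow> \<sigma> x = \<tau> x) \<Longrightarrow> subst_goal \<sigma> G = subst_goal \<tau> G"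
  by (auto simp: subst_goal_def vars_goal_def intro: subst_atm_cong)

lemma subst_goal_append: "subst_goal \<sigma> (xs @ ys) = subst_goal \<sigma> xs @ subst_goal \<sigma> ys"
  by (simp add: subst_goal_def)

lemma subst_goal_take: "subst_goal \<sigma> (take i xs) = take i (subst_goal \<sigma> xs)"
  by (simp add: subst_goal_def take_map)

lemma subst_goal_drop: "subst_goal \<sigma> (drop i xs) = drop i (subst_goal \<sigma> xs)"
  by (simp add: subst_goal_def drop_map)

lemma nth_subst_goal: "i < length xs \<Longrightarrow> subst_goal \<sigma> xs ! i = subst_atm \<sigma> (xs ! i)"
  by (simp add: subst_goal_def)

lemma length_subst_goal [simp]: "length (subst_goal \<sigma> xs) = length xs"
  by (simp add: subst_goal_def)

lemma vars_goal_append [simp]: "vars_goal (xs @ ys) = vars_goal xs \<union> vars_goal ys"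
  by (simp add: vars_goal_def)

lemma vars_goal_Cons [simp]: "vars_goal (a # G) = vars_atm a \<union> vars_goal G"
  by (simp add: vars_goal_def)

lemma vars_goal_Nil [simp]: "vars_goal [] = {}"
  by (simp add: vars_goal_def)

lemma vars_goal_take: "vars_goal (take i G) \<subseteq> vars_goal G"
  by (auto simp: vars_goal_def dest: in_set_takeD)

lemma vars_goal_drop: "vars_goal (drop i G) \<subseteq> vars_goal G"
  by (auto simp: vars_goal_def dest: in_set_dropD)

lemma vars_atm_nth_subset: "i < length G \<Longrightarrow> vars_atm (G ! i) \<subseteq> vars_goal G"
  by (auto simp: vars_goal_def) (metis nth_mem)

lemma finite_vars_trm: "finite (vars_trm t)"
  by (induction t) auto

lemma finite_vars_atm: "finite (vars_atm a)"
  by (cases a) (auto simp: finite_vars_trm)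

lemma finite_vars_goal: "finite (vars_goal G)"
  by (auto simp: vars_goal_def finite_vars_atm)

lemma finite_vars_clause: "finite (vars_clause c)"
  by (auto simp: vars_clause_def finite_vars_atm finite_vars_goal)

lemma vars_subst_trm: "vars_trm (subst_trm \<theta> t) \<subseteq> vars_trm t \<union> subst_range_vars \<theta>"
proof (induction t)
  case (Var x)
  then show ?case
    by (cases "x \<in> subst_dom \<theta>") (auto simp: subst_range_vars_def subst_dom_def)
qed fastforce

lemma vars_subst_atm: "vars_atm (subst_atm \<theta> a) \<subseteq> vars_atm a \<union> subst_range_vars \<theta>"
  by (cases a) (use vars_subst_trm in fastforce)

lemma vars_subst_goal: "vars_goal (subst_goal \<theta> G) \<subseteq> vars_goal G \<union> subst_range_vars \<theta>"
  using vars_subst_atm by (fastforce simp: vars_goal_def subst_goal_def)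

lemma vars_trm_ren: "vars_trm (subst_trm (ren f) t) = f ` vars_trm t"
  by (induction t) (auto simp: ren_def)

lemma vars_atm_ren: "vars_atm (subst_atm (ren f) a) = f ` vars_atm a"
  by (cases a) (auto simp: vars_trm_ren)

lemma vars_goal_ren: "vars_goal (subst_goal (ren f) G) = f ` vars_goal G"
  by (auto simp: vars_goal_def subst_goal_def vars_atm_ren)

lemma vars_clause_ren:
  "vars_clause (subst_clause (subst_comp \<xi> (ren f)) c) = f ` vars_clause (subst_clause \<xi> c)"
  by (simp add: vars_clause_def subst_clause_def subst_atm_comp[symmetric]
      subst_goal_comp[symmetric] vars_atm_ren vars_goal_ren image_Un)

lemma subst_comp_ren: "subst_comp (ren f) (ren g) = ren (g \<circ> f)"
  by (auto simp: subst_comp_def ren_def)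
lemma subst_comp_ren_inv: "bij f \<Longrightarrow> subst_comp (ren f) (ren (inv f)) = Var"
  by (auto simp: subst_comp_def ren_def bij_is_inj fun_eq_iff)
lemma subst_trm_ren_inject: "bij f \<Longrightarrow> subst_trm (ren f) s = subst_trm (ren f) t \<longleftrightarrow> s = t"
  by (metis subst_trm_comp subst_comp_ren_inv subst_trm_Var)

definition ren_conj :: "('v \<Rightarrow> 'v) \<Rightarrow> ('f, 'v) subst \<Rightarrow> ('f, 'v) subst" where
  "ren_conj f \<theta> = (\<lambda>x. subst_trm (ren f) (\<theta> (inv f x)))"

lemma subst_comp_ren_conj: "bij f \<Longrightarrow> subst_comp (ren f) (ren_conj f \<theta>) = subst_comp \<theta> (ren f)"
  by (auto simp: subst_comp_def ren_conj_def ren_def fun_eq_iff bij_is_inj)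

lemma subst_trm_ren_conj:
  "bij f \<Longrightarrow> subst_trm (ren_conj f \<theta>) (subst_trm (ren f) t) = subst_trm (ren f) (subst_trm \<theta> t)"
  by (simp add: subst_trm_comp subst_comp_ren_conj)

lemma subst_atm_ren_conj:
  "bij f \<Longrightarrow> subst_atm (ren_conj f \<theta>) (subst_atm (ren f) a) = subst_atm (ren f) (subst_atm \<theta> a)"
  by (simp add: subst_atm_comp subst_comp_ren_conj)

lemma subst_goal_ren_conj:
  "bij f \<Longrightarrow> subst_goal (ren_conj f \<theta>) (subst_goal (ren f) G) = subst_goal (ren f) (subst_goal \<theta> G)"
  by (simp add: subst_goal_comp subst_comp_ren_conj)

lemma subst_dom_ren_conj:
  assumes "bij f"
  shows "subst_dom (ren_conj f \<theta>) = f ` subst_dom \<theta>"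
proof -
  have "x \<in> subst_dom (ren_conj f \<theta>) \<longleftrightarrow> inv f x \<in> subst_dom \<theta>" for x
  proof -
    have x: "subst_trm (ren f) (Var (inv f x)) = Var x"
      using assms by (simp add: ren_def bij_is_surj surj_f_inv_f)
    have "x \<in> subst_dom (ren_conj f \<theta>) \<longleftrightarrow>
        subst_trm (ren f) (\<theta> (inv f x)) \<noteq> subst_trm (ren f) (Var (inv f x))"
      unfolding subst_dom_def ren_conj_def mem_Collect_eq x by (rule refl)
    then show ?thesis
      unfolding subst_trm_ren_inject[OF assms] by (simp add: subst_dom_def)
  qed
  moreover have "f ` subst_dom \<theta> = {x. inv f x \<in> subst_dom \<theta>}"
    using bij_image_Collect_eq[OF assms, of "\<lambda>y. y \<in> subst_dom \<theta>"] by simp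
  ultimately show ?thesis
    by blast
qed

lemma subst_range_vars_ren_conj:
  assumes "bij f"
  shows "subst_range_vars (ren_conj f \<theta>) = f ` subst_range_vars \<theta>"
proof -
  have "subst_range_vars (ren_conj f \<theta>) = (\<Union>x\<in>f ` subst_dom \<theta>. f ` vars_trm (\<theta> (inv f x)))"
    unfolding subst_range_vars_def subst_dom_ren_conj[OF assms] by (simp add: ren_conj_def vars_trm_ren)
  also have "\<dots> = f ` subst_range_vars \<theta>"
    using assms by (auto simp: subst_range_vars_def bij_is_inj)
  finally show ?thesis .
qed

lemma idempotent_ren_conj:
  assumes "bij f" and "idempotent \<theta>"
  shows "idempotent (ren_conj f \<theta>)"
proof -
  have "subst_trm \<theta> (\<theta> y) = \<theta> y" for y
    using assms(2) unfolding idempotent_def by (metis subst_comp_def)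
  moreover have "ren_conj f \<theta> x = subst_trm (ren f) (\<theta> (inv f x))" for x
    by (simp add: ren_conj_def)
  ultimately have "subst_comp (ren_conj f \<theta>) (ren_conj f \<theta>) x = ren_conj f \<theta> x" for x
    by (simp only: subst_comp_def subst_trm_ren_conj[OF assms(1)])
  then show ?thesis
    by (auto simp: idempotent_def)
qed

lemma is_mgu_ren_conj:
  assumes f: "bij f" and mgu: "is_mgu \<theta> a b"
  shows "is_mgu (ren_conj f \<theta>) (subst_atm (ren f) a) (subst_atm (ren f) b)"
  unfolding is_mgu_def
proof (intro conjI allI impI)
  show "is_unifier (ren_conj f \<theta>) (subst_atm (ren f) a) (subst_atm (ren f) b)"
    using assms by (simp add: is_unifier_def is_mgu_def subst_atm_ren_conj)
next
  fix \<sigma>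
  assume "is_unifier \<sigma> (subst_atm (ren f) a) (subst_atm (ren f) b)"
  then have "is_unifier (subst_comp (ren f) \<sigma>) a b"
    by (simp add: is_unifier_def subst_atm_comp)
  then obtain \<eta> where \<eta>: "subst_comp (ren f) \<sigma> = subst_comp \<theta> \<eta>"
    using mgu by (auto simp: is_mgu_def)
  have "subst_comp (ren_conj f \<theta>) (subst_comp (ren (inv f)) \<eta>) x = \<sigma> x" for x
  proof -
    have "subst_comp (ren f) (subst_comp (ren (inv f)) \<eta>) = \<eta>"
      using f by (auto simp: fun_eq_iff subst_comp_def ren_def bij_is_inj)
    then have "subst_comp (ren_conj f \<theta>) (subst_comp (ren (inv f)) \<eta>) x = subst_trm \<eta> (\<theta> (inv f x))"
      by (simp add: subst_comp_def ren_conj_def subst_trm_comp)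
    also have "\<dots> = subst_comp (ren f) \<sigma> (inv f x)"
      by (metis \<eta> subst_comp_def)
    also have "\<dots> = \<sigma> x"
      using f by (simp add: subst_comp_def ren_def bij_is_surj surj_f_inv_f)
    finally show ?thesis .
  qed
  then show "\<exists>\<eta>. \<sigma> = subst_comp (ren_conj f \<theta>) \<eta>"
    by (metis ext)
qed

lemma relevant_ren_conj:
  "bij f \<Longrightarrow> relevant \<theta> a b \<Longrightarrow> relevant (ren_conj f \<theta>) (subst_atm (ren f) a) (subst_atm (ren f) b)"
  by (auto simp: relevant_def subst_dom_ren_conj subst_range_vars_ren_conj vars_atm_ren)

lemma sld_step_ren:
  assumes f: "bij f" and step: "sld_step P N c \<xi> \<theta> N'"
  shows "sld_step P (subst_goal (ren f) N) c (subst_comp \<xi> (ren f)) (ren_conj f \<theta>) (subst_goal (ren f) N')"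
proof -
  obtain i where c: "c \<in> P" and \<xi>: "is_renaming \<xi>" and i: "i < length N"
    and idem: "idempotent \<theta>" and rel: "relevant \<theta> (subst_atm \<xi> (fst c)) (N ! i)"
    and mgu: "is_mgu \<theta> (subst_atm \<xi> (fst c)) (N ! i)"
    and N': "N' = subst_goal \<theta> (take i N @ subst_goal \<xi> (snd c) @ drop (Suc i) N)"
    using step by (auto simp: sld_step_def)
  have ren: "is_renaming (subst_comp \<xi> (ren f))"
  proof -
    obtain g where "bij g" and "\<xi> = ren g"
      using \<xi> by (auto simp: is_renaming_iff)
    then show ?thesis
      using bij_comp[of g f] f by (auto simp: is_renaming_iff subst_comp_ren)
  qed
  have hd: "subst_atm (ren f) (subst_atm \<xi> (fst c)) = subst_atm (subst_comp \<xi> (ren f)) (fst c)"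
    by (simp add: subst_atm_comp)
  have nth: "subst_atm (ren f) (N ! i) = subst_goal (ren f) N ! i"
    using i by (simp add: nth_subst_goal)
  have "subst_goal (ren f) N' = subst_goal (ren_conj f \<theta>)
      (take i (subst_goal (ren f) N) @ subst_goal (subst_comp \<xi> (ren f)) (snd c)
        @ drop (Suc i) (subst_goal (ren f) N))"
  proof -
    have "take i (subst_goal (ren f) N) @ subst_goal (subst_comp \<xi> (ren f)) (snd c)
          @ drop (Suc i) (subst_goal (ren f) N)
        = subst_goal (ren f) (take i N @ subst_goal \<xi> (snd c) @ drop (Suc i) N)"
      by (simp add: subst_goal_append subst_goal_take subst_goal_drop subst_goal_comp)
    then show ?thesis
      by (simp add: N' subst_goal_ren_conj[OF f])
  qed
  moreover have "i < length (subst_goal (ren f) N)"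
    using i by simp
  ultimately show ?thesis
    using c ren idempotent_ren_conj[OF f idem] relevant_ren_conj[OF f rel] is_mgu_ren_conj[OF f mgu]
    unfolding sld_step_def hd nth by blast
qed

lemma sld_step_subseq:
  assumes step: "sld_step P N c \<xi> \<theta> N'" and sub: "subseq N M"
  shows "\<exists>M'. sld_step P M c \<xi> \<theta> M' \<and> subseq N' M'"
proof -
  obtain i where i: "i < length N" and c: "c \<in> P" "is_renaming \<xi>" "idempotent \<theta>"
    "relevant \<theta> (subst_atm \<xi> (fst c)) (N ! i)" "is_mgu \<theta> (subst_atm \<xi> (fst c)) (N ! i)"
    and N': "N' = subst_goal \<theta> (take i N @ subst_goal \<xi> (snd c) @ drop (Suc i) N)"
    using step by (auto simp: sld_step_def)
  obtain j where j: "j < length M" "M ! j = N ! i"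
    "subseq (take i N) (take j M)" "subseq (drop (Suc i) N) (drop (Suc j) M)"
    using subseq_nth_split[OF sub i] by blast
  define M' where "M' = subst_goal \<theta> (take j M @ subst_goal \<xi> (snd c) @ drop (Suc j) M)"
  have "sld_step P M c \<xi> \<theta> M'"
    unfolding sld_step_def M'_def using c j(1,2) by auto
  moreover have "subseq N' M'"
    unfolding N' M'_def subst_goal_def
    by (intro subseq_map list_emb_append_mono j(3,4) subseq_order.order_refl)
  ultimately show ?thesis
    by blast
qed

text \<open>In a state (A, H) after k steps, A is the instantiated initial goal G \<theta>0 ... \<theta>(k-1)
  and H the current goal.\<close>

type_synonym ('p, 'f, 'v) state = "('p, 'f, 'v) goal \<times> ('p, 'f, 'v) goal"

definition rename_state :: "('v \<Rightarrow> 'v) \<Rightarrow> ('p, 'f, 'v) state \<Rightarrow> ('p, 'f, 'v) state" where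
  "rename_state f s = (subst_goal (ren f) (fst s), subst_goal (ren f) (snd s))"

definition state_vars :: "('p, 'f, 'v) state \<Rightarrow> 'v set" where
  "state_vars s = vars_goal (fst s) \<union> vars_goal (snd s)"

definition variant :: "('p, 'f, 'v) state \<Rightarrow> ('p, 'f, 'v) state \<Rightarrow> bool" where
  "variant s s' \<longleftrightarrow> (\<exists>f. bij f \<and> s' = rename_state f s)"

definition canon :: "(nat \<Rightarrow> 'v) \<Rightarrow> ('p, 'f, 'v) state \<Rightarrow> ('p, 'f, 'v) state" where
  "canon vs s = (SOME s'. variant s s' \<and> state_vars s' \<subseteq> vs ` {..< card (state_vars s)})"

text \<open>Renaming the clause apart from the whole state, not only from the current goal, is what
  the standardisation-apart condition of derivations guarantees.\<close>

definition state_step ::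
  "('p, 'f, 'v) clause set \<Rightarrow> ('p, 'f, 'v) state \<Rightarrow> ('p, 'f, 'v) clause \<Rightarrow>
   ('f, 'v) subst \<Rightarrow> ('f, 'v) subst \<Rightarrow> ('p, 'f, 'v) state \<Rightarrow> bool" where
  "state_step P s c \<xi> \<theta> s' \<longleftrightarrow>
     sld_step P (snd s) c \<xi> \<theta> (snd s') \<and> fst s' = subst_goal \<theta> (fst s) \<and>
     vars_clause (subst_clause \<xi> c) \<inter> state_vars s = {}"

lemma rename_state_comp: "rename_state g (rename_state f s) = rename_state (g \<circ> f) s"
  by (simp add: rename_state_def subst_goal_comp subst_comp_ren)

lemma rename_state_inv: "bij f \<Longrightarrow> rename_state (inv f) (rename_state f s) = s"
  by (simp add: rename_state_def subst_goal_comp subst_comp_ren_inv)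

lemma state_vars_rename_state: "state_vars (rename_state f s) = f ` state_vars s"
  by (simp add: state_vars_def rename_state_def vars_goal_ren image_Un)

lemma finite_state_vars: "finite (state_vars s)"
  by (simp add: state_vars_def finite_vars_goal)

lemma rename_state_cong: "(\<And>x. x \<in> state_vars s \<Longrightarrow> f x = g x) \<Longrightarrow> rename_state f s = rename_state g s"
  unfolding rename_state_def state_vars_def
  by (metis UnCI ren_def subst_goal_cong)

lemma variant_rename_state: "bij f \<Longrightarrow> variant s (rename_state f s)"
  by (auto simp: variant_def)

lemma variant_sym: "variant s s' \<Longrightarrow> variant s' s"
  unfolding variant_def by (metis bij_imp_bij_inv rename_state_inv)

lemma variant_trans: "variant s s' \<Longrightarrow> variant s' s'' \<Longrightarrow> variant s s''"
  unfolding variant_def by (metis bij_comp rename_state_comp)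

lemma card_state_vars_variant: "variant s s' \<Longrightarrow> card (state_vars s') = card (state_vars s)"
  unfolding variant_def
  by (metis state_vars_rename_state bij_is_inj card_image inj_on_subset subset_UNIV)

lemma canon_spec:
  assumes "inj vs"
  shows "variant s (canon vs s)" and "state_vars (canon vs s) \<subseteq> vs ` {..< card (state_vars s)}"
proof -
  have "card (state_vars s) = card (vs ` {..< card (state_vars s)})"
    using assms by (simp add: card_image inj_on_subset)
  then obtain h where h: "bij_betw h (state_vars s) (vs ` {..< card (state_vars s)})"
    using finite_same_card_bij finite_state_vars by blast
  then obtain f where f: "bij f" "\<forall>x\<in>state_vars s. f x = h x"
    using bij_extend[OF finite_state_vars bij_betw_imp_inj_on] by blast
  have "state_vars (rename_state f s) = vs ` {..< card (state_vars s)}"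
    using f(2) h by (simp add: state_vars_rename_state bij_betw_def cong: image_cong)
  then have "\<exists>s'. variant s s' \<and> state_vars s' \<subseteq> vs ` {..< card (state_vars s)}"
    using variant_rename_state[OF f(1)] by blast
  then have "variant s (canon vs s) \<and> state_vars (canon vs s) \<subseteq> vs ` {..< card (state_vars s)}"
    unfolding canon_def by (rule someI_ex)
  then show "variant s (canon vs s)" and "state_vars (canon vs s) \<subseteq> vs ` {..< card (state_vars s)}"
    by blast+
qed

lemma canon_cong: "variant s s' \<Longrightarrow> canon vs s = canon vs s'"
  unfolding canon_def
  by (metis card_state_vars_variant variant_sym variant_trans)

lemma canon_eq_if_variant:
  assumes "inj vs" and "variant (canon vs s) (canon vs s')"
  shows "canon vs s = canon vs s'"
  by (metis assms canon_spec(1) canon_cong)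

lemma evr_pruned_iff_variant:
  "evr_pruned G \<theta>s Ns \<longleftrightarrow> (\<exists>i j. i < j \<and>
     variant (subst_goal (comp_upto \<theta>s i) G, Ns i) (subst_goal (comp_upto \<theta>s j) G, Ns j))"
  unfolding evr_pruned_def variant_def rename_state_def is_renaming_iff by auto

lemma state_step_ren:
  assumes f: "bij f" and step: "state_step P s c \<xi> \<theta> s'"
  shows "state_step P (rename_state f s) c (subst_comp \<xi> (ren f)) (ren_conj f \<theta>) (rename_state f s')"
proof -
  have "vars_clause (subst_clause (subst_comp \<xi> (ren f)) c) \<inter> state_vars (rename_state f s)
      = f ` (vars_clause (subst_clause \<xi> c) \<inter> state_vars s)"
    using f by (simp add: vars_clause_ren state_vars_rename_state image_Int bij_is_inj)
  moreover have "sld_step P (subst_goal (ren f) (snd s)) c (subst_comp \<xi> (ren f)) (ren_conj f \<theta>)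
      (subst_goal (ren f) (snd s'))"
    using step by (intro sld_step_ren[OF f]) (simp add: state_step_def)
  ultimately show ?thesis
    using step by (simp add: state_step_def rename_state_def subst_goal_ren_conj[OF f])
qed

lemma state_vars_state_step:
  assumes "state_step P s c \<xi> \<theta> s'"
  shows "state_vars s' \<subseteq> state_vars s \<union> vars_clause (subst_clause \<xi> c)"
proof -
  obtain i where i: "i < length (snd s)"
    and rel: "relevant \<theta> (subst_atm \<xi> (fst c)) (snd s ! i)"
    and s': "snd s' = subst_goal \<theta> (take i (snd s) @ subst_goal \<xi> (snd c) @ drop (Suc i) (snd s))"
      "fst s' = subst_goal \<theta> (fst s)"
    using assms by (auto simp: state_step_def sld_step_def)
  let ?V = "state_vars s \<union> vars_clause (subst_clause \<xi> c)"
  have "subst_range_vars \<theta> \<subseteq> ?V"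
    using rel vars_atm_nth_subset[OF i]
    by (auto simp: relevant_def state_vars_def vars_clause_def subst_clause_def)
  moreover have "vars_goal (take i (snd s) @ subst_goal \<xi> (snd c) @ drop (Suc i) (snd s)) \<subseteq> ?V"
    using vars_goal_take vars_goal_drop
    by (fastforce simp: state_vars_def vars_clause_def subst_clause_def)
  ultimately show ?thesis
    using vars_subst_goal[of \<theta>] s' by (fastforce simp: state_vars_def)
qed

section \<open>Function-free states over a finite vocabulary\<close>

fun flat_trm :: "'f set \<Rightarrow> ('f, 'v) trm \<Rightarrow> bool" where
  "flat_trm Cs (Var x) = True"
| "flat_trm Cs (Fn f ts) = (ts = [] \<and> f \<in> Cs)"

fun flat_atm :: "('p \<times> nat) set \<Rightarrow> 'f set \<Rightarrow> ('p, 'f, 'v) atm \<Rightarrow> bool" where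
  "flat_atm Sig Cs (Atm p ts) = ((p, length ts) \<in> Sig \<and> (\<forall>t\<in>set ts. flat_trm Cs t))"

definition flat_goal :: "('p \<times> nat) set \<Rightarrow> 'f set \<Rightarrow> ('p, 'f, 'v) goal \<Rightarrow> bool" where
  "flat_goal Sig Cs G \<longleftrightarrow> (\<forall>a\<in>set G. flat_atm Sig Cs a)"

definition flat_state :: "('p \<times> nat) set \<Rightarrow> 'f set \<Rightarrow> ('p, 'f, 'v) state \<Rightarrow> bool" where
  "flat_state Sig Cs s \<longleftrightarrow> flat_goal Sig Cs (fst s) \<and> flat_goal Sig Cs (snd s)"

definition flat_subst :: "'f set \<Rightarrow> ('f, 'v) subst \<Rightarrow> bool" where
  "flat_subst Cs \<theta> \<longleftrightarrow> (\<forall>x. flat_trm Cs (\<theta> x))"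

definition flat_states ::
  "('p \<times> nat) set \<Rightarrow> 'f set \<Rightarrow> nat \<Rightarrow> nat \<Rightarrow> 'v set \<Rightarrow> ('p, 'f, 'v) state set" where
  "flat_states Sig Cs m n V = {s. flat_state Sig Cs s \<and> length (fst s) \<le> m \<and> length (snd s) \<le> n
     \<and> state_vars s \<subseteq> V}"

fun atm_sig :: "('p, 'f, 'v) atm \<Rightarrow> 'p \<times> nat" where
  "atm_sig (Atm p ts) = (p, length ts)"

fun atm_consts :: "('p, 'f, 'v) atm \<Rightarrow> 'f set" where
  "atm_consts (Atm p ts) = {f. Fn f [] \<in> set ts}"

lemma flat_subst_trm: "flat_trm Cs t \<Longrightarrow> flat_subst Cs \<theta> \<Longrightarrow> flat_trm Cs (subst_trm \<theta> t)"
  by (cases t) (auto simp: flat_subst_def)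

lemma flat_subst_atm: "flat_atm Sig Cs a \<Longrightarrow> flat_subst Cs \<theta> \<Longrightarrow> flat_atm Sig Cs (subst_atm \<theta> a)"
  by (cases a) (auto simp: flat_subst_trm)

lemma flat_subst_goal: "flat_goal Sig Cs G \<Longrightarrow> flat_subst Cs \<theta> \<Longrightarrow> flat_goal Sig Cs (subst_goal \<theta> G)"
  by (auto simp: flat_goal_def subst_goal_def flat_subst_atm)

lemma flat_subst_ren: "flat_subst Cs (ren f)"
  by (simp add: flat_subst_def ren_def)

lemma flat_goal_append [simp]: "flat_goal Sig Cs (xs @ ys) \<longleftrightarrow> flat_goal Sig Cs xs \<and> flat_goal Sig Cs ys"
  by (auto simp: flat_goal_def)

lemma flat_goal_take: "flat_goal Sig Cs G \<Longrightarrow> flat_goal Sig Cs (take i G)"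
  by (auto simp: flat_goal_def dest: in_set_takeD)

lemma flat_goal_drop: "flat_goal Sig Cs G \<Longrightarrow> flat_goal Sig Cs (drop i G)"
  by (auto simp: flat_goal_def dest: in_set_dropD)

lemma flat_state_variant: "variant s s' \<Longrightarrow> flat_state Sig Cs s \<Longrightarrow> flat_state Sig Cs s'"
  by (auto simp: variant_def flat_state_def rename_state_def flat_subst_goal flat_subst_ren)

lemma length_variant: "variant s s' \<Longrightarrow> length (fst s') = length (fst s) \<and> length (snd s') = length (snd s)"
  by (auto simp: variant_def rename_state_def)

lemma flat_atm_vocabulary:
  assumes "ff_atm a" and "a \<in> A"
  shows "flat_atm (atm_sig ` A) (\<Union> (atm_consts ` A)) a"
proof (cases a)
  case (Atm p ts)
  have "flat_trm (\<Union> (atm_consts ` A)) t" if "t \<in> set ts" for t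
    using assms that Atm by (cases t) force+
  then show ?thesis
    using assms(2) Atm by force
qed

lemma finite_atm_consts: "finite (atm_consts a)"
proof (cases a)
  case (Atm p ts)
  have "atm_consts a \<subseteq> (\<lambda>t. case t of Fn f _ \<Rightarrow> f | Var _ \<Rightarrow> undefined) ` set ts"
    using Atm by force
  then show ?thesis
    by (rule finite_subset) simp
qed

text \<open>If \<theta> bound a variable to a non-flat term, then composing \<theta> with the map that
  replaces such terms by a fixed variable would give a unifier that is not an instance of \<theta>.\<close>

lemma is_mgu_flat_subst:
  fixes \<theta> :: "('f, 'v) subst"
  assumes a: "flat_atm Sig Cs a" and b: "flat_atm Sig Cs b" and mgu: "is_mgu \<theta> a b"
  shows "flat_subst Cs \<theta>"
proof -
  define flatten where "flatten t = (if flat_trm Cs t then t else Var undefined)" for t :: "('f, 'v) trm"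
  define \<sigma> where "\<sigma> y = flatten (\<theta> y)" for y
  have "subst_trm \<sigma> t = flatten (subst_trm \<theta> t)" if "flat_trm Cs t" for t
    using that by (cases t) (auto simp: \<sigma>_def flatten_def)
  then have "flat_atm Sig Cs c \<Longrightarrow> subst_atm \<sigma> c = (case subst_atm \<theta> c of Atm p ts \<Rightarrow> Atm p (map flatten ts))"
    for c
    by (cases c) auto
  then have "is_unifier \<sigma> a b"
    using mgu a b by (simp add: is_mgu_def is_unifier_def)
  then obtain \<eta> where \<eta>: "\<sigma> = subst_comp \<theta> \<eta>"
    using mgu by (auto simp: is_mgu_def)
  have "flat_trm Cs (\<theta> x)" for x
  proof (rule ccontr)
    assume "\<not> flat_trm Cs (\<theta> x)"
    then obtain f ts where "\<theta> x = Fn f ts" and "\<sigma> x = Var undefined"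
      by (cases "\<theta> x") (auto simp: \<sigma>_def flatten_def)
    then show False
      using \<eta> by (simp add: subst_comp_def fun_eq_iff)
  qed
  then show ?thesis
    by (simp add: flat_subst_def)
qed

lemma finite_flat_atms:
  assumes "finite Sig" and "finite Cs" and "finite V"
  shows "finite {a :: ('p, 'f, 'v) atm. flat_atm Sig Cs a \<and> vars_atm a \<subseteq> V}"
proof -
  define T :: "('f, 'v) trm set" where "T = Var ` V \<union> (\<lambda>f. Fn f []) ` Cs"
  define n where "n = Max (snd ` Sig)"
  have "{a :: ('p, 'f, 'v) atm. flat_atm Sig Cs a \<and> vars_atm a \<subseteq> V}
      \<subseteq> (\<lambda>(p, ts). Atm p ts) ` (fst ` Sig \<times> {ts. set ts \<subseteq> T \<and> length ts \<le> n})"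
  proof
    fix a :: "('p, 'f, 'v) atm"
    assume "a \<in> {a. flat_atm Sig Cs a \<and> vars_atm a \<subseteq> V}"
    then obtain p ts where a: "a = Atm p ts" "(p, length ts) \<in> Sig" "\<forall>t\<in>set ts. flat_trm Cs t"
      "\<Union> (set (map vars_trm ts)) \<subseteq> V"
      by (cases a) auto
    have "length ts \<le> n"
      unfolding n_def using a(2) assms(1) by (metis Max_ge finite_imageI image_eqI snd_conv)
    moreover have "t \<in> T" if "t \<in> set ts" for t
    proof (cases t)
      case (Var x)
      then show ?thesis
        using a(4) that by (force simp: T_def)
    next
      case (Fn f us)
      then show ?thesis
        using a(3) that by (auto simp: T_def)
    qed
    ultimately show "a \<in> (\<lambda>(p, ts). Atm p ts) ` (fst ` Sig \<times> {ts. set ts \<subseteq> T \<and> length ts \<le> n})"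
      using a(1,2) by (auto simp: image_iff intro!: bexI[of _ "(p, length ts)"])
  qed
  moreover have "finite {ts. set ts \<subseteq> T \<and> length ts \<le> n}"
    using assms by (simp add: T_def finite_lists_length_le)
  ultimately show ?thesis
    using assms(1) by (auto intro: finite_subset)
qed

lemma finite_flat_states:
  assumes "finite Sig" and "finite Cs" and "finite V"
  shows "finite (flat_states Sig Cs m n V :: ('p, 'f, 'v) state set)"
proof -
  define As where "As = {a :: ('p, 'f, 'v) atm. flat_atm Sig Cs a \<and> vars_atm a \<subseteq> V}"
  have "flat_states Sig Cs m n V \<subseteq> {xs. set xs \<subseteq> As \<and> length xs \<le> m} \<times> {xs. set xs \<subseteq> As \<and> length xs \<le> n}"
    by (force simp: flat_states_def flat_state_def As_def flat_goal_def state_vars_def vars_goal_def)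
  moreover have "finite As"
    using finite_flat_atms[OF assms] by (simp add: As_def)
  then have "finite ({xs. set xs \<subseteq> As \<and> length xs \<le> m} \<times> {xs. set xs \<subseteq> As \<and> length xs \<le> n})"
    using finite_lists_length_le by blast
  ultimately show ?thesis
    by (rule finite_subset)
qed

lemma card_vars_flat_trms:
  "\<forall>t\<in>set ts. flat_trm Cs t \<Longrightarrow> card (\<Union> (vars_trm ` set ts)) \<le> length ts"
proof (induction ts)
  case (Cons t ts)
  have "card (vars_trm t) \<le> 1"
    using Cons.prems by (cases t) auto
  then show ?case
    using Cons card_Un_le[of "vars_trm t" "\<Union> (vars_trm ` set ts)"] by simp
qed simp

lemma card_vars_goal_flat:
  assumes "flat_goal Sig Cs G" and "finite Sig"
  shows "card (vars_goal G) \<le> Max (snd ` Sig) * length G"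
  using assms(1)
proof (induction G)
  case (Cons a G)
  obtain p ts where a: "a = Atm p ts"
    by (cases a)
  have "\<forall>t\<in>set ts. flat_trm Cs t" and sig: "(p, length ts) \<in> Sig"
    using Cons.prems a by (auto simp: flat_goal_def)
  then have "card (vars_atm a) \<le> length ts"
    using card_vars_flat_trms a by simp
  also have "length ts \<le> Max (snd ` Sig)"
    using sig assms(2) by (metis Max_ge finite_imageI image_eqI snd_conv)
  finally have "card (vars_atm a) \<le> Max (snd ` Sig)" .
  then show ?case
    using Cons card_Un_le[of "vars_atm a" "vars_goal G"] by (simp add: flat_goal_def)
qed simp

lemma canon_in_flat_states:
  assumes "inj vs" and "finite Sig" and flat: "flat_state Sig Cs s"
    and "length (fst s) \<le> m" and "length (snd s) \<le> n"
  shows "canon vs s \<in> flat_states Sig Cs m n (vs ` {..< Max (snd ` Sig) * (m + n)})"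
proof -
  have "card (state_vars s) \<le> card (vars_goal (fst s)) + card (vars_goal (snd s))"
    by (simp add: state_vars_def card_Un_le)
  also have "\<dots> \<le> Max (snd ` Sig) * length (fst s) + Max (snd ` Sig) * length (snd s)"
    using flat by (intro add_mono card_vars_goal_flat[of Sig Cs] assms(2)) (simp_all add: flat_state_def)
  also have "\<dots> \<le> Max (snd ` Sig) * (m + n)"
    using assms(4,5) by (simp add: add_mono add_mult_distrib2)
  finally have "vs ` {..< card (state_vars s)} \<subseteq> vs ` {..< Max (snd ` Sig) * (m + n)}"
    by (simp add: image_mono)
  then have "state_vars (canon vs s) \<subseteq> vs ` {..< Max (snd ` Sig) * (m + n)}"
    using canon_spec(2)[OF assms(1), of s] by blast
  moreover have "flat_state Sig Cs (canon vs s)"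
    using canon_spec(1)[OF assms(1)] flat by (rule flat_state_variant)
  moreover have "length (fst (canon vs s)) \<le> m" and "length (snd (canon vs s)) \<le> n"
    using length_variant[OF canon_spec(1)[OF assms(1)], of s] assms(4,5) by simp_all
  ultimately show ?thesis
    by (simp add: flat_states_def)
qed


section \<open>The graph of SLD states up to renaming\<close>

context
  fixes P :: "('p, 'f, 'v) clause set" and G :: "('p, 'f, 'v) goal"
  assumes infinite_vars: "infinite (UNIV :: 'v set)" and finite_P: "finite P"
    and ff_P: "ff_program P" and ff_G: "ff_goal G"
begin

definition prog_atms :: "('p, 'f, 'v) atm set" where
  "prog_atms = set G \<union> (\<Union>c\<in>P. insert (fst c) (set (snd c)))"

definition prog_sig :: "('p \<times> nat) set" where
  "prog_sig = atm_sig ` prog_atms"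

definition prog_consts :: "'f set" where
  "prog_consts = \<Union> (atm_consts ` prog_atms)"

definition max_body_length :: nat where
  "max_body_length = Max ((\<lambda>c. length (snd c)) ` P)"

definition var_enum :: "nat \<Rightarrow> 'v" where
  "var_enum = (SOME vs. inj vs)"

definition canon_succ :: "('p, 'f, 'v) state \<Rightarrow> ('p, 'f, 'v) state \<Rightarrow> bool" where
  "canon_succ s t \<longleftrightarrow> (\<exists>c \<xi> \<theta> s'. state_step P s c \<xi> \<theta> s' \<and> t = canon var_enum s')"

definition canon_root :: "('p, 'f, 'v) state" where
  "canon_root = canon var_enum (G, G)"

lemma inj_var_enum: "inj var_enum"
  using infinite_countable_subset[OF infinite_vars] unfolding var_enum_def by (metis someI_ex)

lemma finite_prog_sig: "finite prog_sig"
  by (simp add: prog_sig_def prog_atms_def finite_P)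

lemma finite_prog_consts: "finite prog_consts"
  by (simp add: prog_consts_def prog_atms_def finite_P finite_atm_consts)

lemma flat_prog_atm: "a \<in> prog_atms \<Longrightarrow> flat_atm prog_sig prog_consts a"
  unfolding prog_sig_def prog_consts_def using ff_P ff_G
  by (intro flat_atm_vocabulary) (auto simp: prog_atms_def ff_program_def ff_goal_def)

lemma flat_state_step:
  assumes flat: "flat_state prog_sig prog_consts s" and step: "state_step P s c \<xi> \<theta> s'"
  shows "flat_state prog_sig prog_consts s'" and "length (fst s') = length (fst s)"
    and "length (snd s') \<le> length (snd s) + max_body_length"
proof -
  obtain i where c: "c \<in> P" and \<xi>: "is_renaming \<xi>" and i: "i < length (snd s)"
    and mgu: "is_mgu \<theta> (subst_atm \<xi> (fst c)) (snd s ! i)"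
    and s': "snd s' = subst_goal \<theta> (take i (snd s) @ subst_goal \<xi> (snd c) @ drop (Suc i) (snd s))"
      "fst s' = subst_goal \<theta> (fst s)"
    using step by (auto simp: state_step_def sld_step_def)
  obtain g where g: "\<xi> = ren g"
    using \<xi> by (auto simp: is_renaming_iff)
  have "flat_atm prog_sig prog_consts (subst_atm \<xi> (fst c))"
    unfolding g using c by (intro flat_subst_atm flat_prog_atm flat_subst_ren) (auto simp: prog_atms_def)
  moreover have "flat_atm prog_sig prog_consts (snd s ! i)"
    using flat i by (auto simp: flat_state_def flat_goal_def)
  ultimately have "flat_subst prog_consts \<theta>"
    using mgu by (rule is_mgu_flat_subst)
  moreover have "flat_goal prog_sig prog_consts (subst_goal \<xi> (snd c))"
    unfolding g using c flat_prog_atm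
    by (intro flat_subst_goal flat_subst_ren) (auto simp: flat_goal_def prog_atms_def)
  ultimately show "flat_state prog_sig prog_consts s'"
    using flat s' by (auto simp: flat_state_def intro!: flat_subst_goal flat_goal_take flat_goal_drop)
  show "length (fst s') = length (fst s)"
    using s' by simp
  have "length (snd c) \<le> max_body_length"
    unfolding max_body_length_def using c finite_P by simp
  then show "length (snd s') \<le> length (snd s) + max_body_length"
    using s' i by simp
qed

lemma flat_state_reachable:
  "canon_succ\<^sup>*\<^sup>* canon_root s \<Longrightarrow> flat_state prog_sig prog_consts s"
proof (induction rule: rtranclp_induct)
  case base
  have "flat_goal prog_sig prog_consts G"
    using flat_prog_atm by (auto simp: flat_goal_def prog_atms_def)
  then show ?case
    unfolding canon_root_def using canon_spec(1)[OF inj_var_enum] flat_state_variant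
    by (metis flat_state_def fst_conv snd_conv)
next
  case (step s t)
  then show ?case
    using flat_state_step(1) canon_spec(1)[OF inj_var_enum] flat_state_variant
    by (metis canon_succ_def)
qed

lemma finite_canon_succ:
  assumes "flat_state prog_sig prog_consts s"
  shows "finite {t. canon_succ s t}"
proof -
  let ?m = "length (fst s)" and ?n = "length (snd s) + max_body_length"
  have "{t. canon_succ s t}
      \<subseteq> flat_states prog_sig prog_consts ?m ?n (var_enum ` {..< Max (snd ` prog_sig) * (?m + ?n)})"
  proof
    fix t
    assume "t \<in> {t. canon_succ s t}"
    then obtain c \<xi> \<theta> s' where step: "state_step P s c \<xi> \<theta> s'" and t: "t = canon var_enum s'"
      by (auto simp: canon_succ_def)
    show "t \<in> flat_states prog_sig prog_consts ?m ?n (var_enum ` {..< Max (snd ` prog_sig) * (?m + ?n)})"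
      unfolding t using flat_state_step[OF assms step]
      by (intro canon_in_flat_states[OF inj_var_enum finite_prog_sig]) simp_all
  qed
  then show ?thesis
    by (rule finite_subset) (simp add: finite_flat_states finite_prog_sig finite_prog_consts)
qed

lemma canon_succ_canon:
  assumes "state_step P s c \<xi> \<theta> s'"
  shows "canon_succ (canon var_enum s) (canon var_enum s')"
proof -
  obtain f where f: "bij f" "canon var_enum s = rename_state f s"
    using canon_spec(1)[OF inj_var_enum, of s] unfolding variant_def by blast
  have "canon var_enum (rename_state f s') = canon var_enum s'"
    using canon_cong variant_rename_state[OF f(1)] variant_sym by metis
  then show ?thesis
    unfolding canon_succ_def f(2) using state_step_ren[OF f(1) assms] by metis
qed

lemma canon_succ_lift:
  assumes succ: "canon_succ t t'" and "variant t s" and "finite U"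
  shows "\<exists>c \<xi> \<theta> s'. state_step P s c \<xi> \<theta> s' \<and> variant t' s' \<and> vars_clause (subst_clause \<xi> c) \<inter> U = {}"
proof -
  obtain c \<xi> \<theta> u where step: "state_step P t c \<xi> \<theta> u" and t': "t' = canon var_enum u"
    using succ unfolding canon_succ_def by blast
  obtain f where f: "bij f" "s = rename_state f t"
    using assms(2) unfolding variant_def by blast
  have "state_vars t \<inter> vars_clause (subst_clause \<xi> c) = {}"
    using step unfolding state_step_def by blast
  moreover have "inj_on f (state_vars t)"
    using bij_is_inj[OF f(1)] by (rule inj_on_subset) simp
  ultimately obtain \<pi> where \<pi>: "bij \<pi>" "\<forall>x\<in>state_vars t. \<pi> x = f x"
    "\<pi> ` vars_clause (subst_clause \<xi> c) \<inter> U = {}"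
    using bij_extend_avoiding[OF infinite_vars finite_state_vars finite_vars_clause _ assms(3)] by blast
  have "rename_state \<pi> t = s"
    using f(2) rename_state_cong[of t \<pi> f] \<pi>(2) by simp
  then have "state_step P s c (subst_comp \<xi> (ren \<pi>)) (ren_conj \<pi> \<theta>) (rename_state \<pi> u)"
    using state_step_ren[OF \<pi>(1) step] by simp
  moreover have "variant t' u"
    using canon_spec(1)[OF inj_var_enum, of u] t' by (simp add: variant_sym)
  then have "variant t' (rename_state \<pi> u)"
    using variant_trans variant_rename_state[OF \<pi>(1)] by blast
  moreover have "vars_clause (subst_clause (subst_comp \<xi> (ren \<pi>)) c) \<inter> U = {}"
    using \<pi>(3) by (simp add: vars_clause_ren)
  ultimately show ?thesis
    by blast
qed

text \<open>The M k are the goals of an SLD derivation that resolves, at every step, the atom selected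
  in the RSLD derivation.\<close>

lemma rsld_shadow:
  assumes D: "inf_rsld_deriv P G Gs Ns \<alpha>s cs \<xi>s \<theta>s"
  shows "\<exists>M. \<forall>k. subseq (Ns k) (M k) \<and>
    canon_succ\<^sup>*\<^sup>* canon_root (canon var_enum (subst_goal (comp_upto \<theta>s k) G, M k))"
proof -
  define A where "A k = subst_goal (comp_upto \<theta>s k) G" for k
  define U where "U k = vars_goal G \<union> (\<Union>l<k. vars_clause (subst_clause (\<xi>s l) (cs l)))" for k
  define shadow where "shadow k M \<longleftrightarrow> subseq (Gs k) M \<and> state_vars (A k, M) \<subseteq> U k \<and>
      canon_succ\<^sup>*\<^sup>* canon_root (canon var_enum (A k, M))" for k M
  have reduced: "subseq (Ns k) (Gs k)" for k
    using D by (simp add: inf_rsld_deriv_def reduced_def)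
  have "\<exists>M'. shadow (Suc k) M'" if shadow: "shadow k M" for k M
  proof -
    have sld: "sld_step P (Ns k) (cs k) (\<xi>s k) (\<theta>s k) (Gs (Suc k))"
      and apart: "standardised_apart G cs \<xi>s k"
      using D by (auto simp: inf_rsld_deriv_def)
    have "subseq (Ns k) M"
      using reduced[of k] shadow subseq_order.trans unfolding shadow_def by blast
    then obtain M' where M': "sld_step P M (cs k) (\<xi>s k) (\<theta>s k) M'" "subseq (Gs (Suc k)) M'"
      using sld_step_subseq[OF sld] by blast
    have "vars_clause (subst_clause (\<xi>s k) (cs k)) \<inter> state_vars (A k, M) = {}"
      using apart shadow unfolding standardised_apart_def shadow_def U_def by blast
    then have step: "state_step P (A k, M) (cs k) (\<xi>s k) (\<theta>s k) (A (Suc k), M')"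
      using M'(1) unfolding state_step_def A_def by (simp add: subst_goal_comp)
    have "U (Suc k) = U k \<union> vars_clause (subst_clause (\<xi>s k) (cs k))"
      by (auto simp: U_def lessThan_Suc)
    then have "state_vars (A (Suc k), M') \<subseteq> U (Suc k)"
      using state_vars_state_step[OF step] shadow unfolding shadow_def by blast
    moreover have "canon_succ\<^sup>*\<^sup>* canon_root (canon var_enum (A (Suc k), M'))"
      using canon_succ_canon[OF step] shadow unfolding shadow_def
      by (meson rtranclp.rtrancl_into_rtrancl)
    ultimately show ?thesis
      using M'(2) unfolding shadow_def by blast
  qed
  moreover have "shadow 0 G"
    using D by (simp add: shadow_def A_def U_def canon_root_def inf_rsld_deriv_def state_vars_def)
  ultimately obtain M where "\<forall>k. shadow k (M k)"
    using dependent_nat_choice[of shadow "\<lambda>_ _ _. True"] by blast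
  then show ?thesis
    using reduced subseq_order.trans unfolding shadow_def A_def by blast
qed

lemma canon_succ_path_canon:
  assumes "y 0 = canon_root" and "\<forall>k. canon_succ (y k) (y (Suc k))"
  shows "\<exists>s. y k = canon var_enum s"
proof (cases k)
  case 0
  then show ?thesis
    using assms(1) by (auto simp: canon_root_def)
next
  case (Suc n)
  then show ?thesis
    using assms(2)[rule_format, of n] unfolding canon_succ_def by blast
qed

lemma sld_deriv_along_path:
  assumes y0: "y 0 = canon_root" and y: "\<forall>k. canon_succ (y k) (y (Suc k))"
  shows "\<exists>Gs cs \<xi>s \<theta>s. inf_sld_deriv P G Gs cs \<xi>s \<theta>s \<and>
    (\<forall>k. variant (y k) (subst_goal (comp_upto \<theta>s k) G, Gs k))"
proof -
  define ok where "ok k z \<longleftrightarrow> variant (y k) (fst z) \<and> finite (snd z) \<and>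
      (k = 0 \<longrightarrow> z = ((G, G), vars_goal G))" for k and z :: "('p, 'f, 'v) state \<times> 'v set"
  define step where "step z z' c \<xi> \<theta> \<longleftrightarrow> state_step P (fst z) c \<xi> \<theta> (fst z') \<and>
      vars_clause (subst_clause \<xi> c) \<inter> snd z = {} \<and> snd z' = snd z \<union> vars_clause (subst_clause \<xi> c)"
    for z z' :: "('p, 'f, 'v) state \<times> 'v set" and c \<xi> \<theta>
  have "ok 0 ((G, G), vars_goal G)"
    using variant_sym[OF canon_spec(1)[OF inj_var_enum, of "(G, G)"]] y0 finite_vars_goal
    by (simp add: ok_def canon_root_def)
  moreover have "\<exists>z'. ok (Suc k) z' \<and> (\<exists>c \<xi> \<theta>. step z z' c \<xi> \<theta>)" if ok_z: "ok k z" for k z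
  proof -
    obtain c \<xi> \<theta> s' where "state_step P (fst z) c \<xi> \<theta> s'" "variant (y (Suc k)) s'"
      "vars_clause (subst_clause \<xi> c) \<inter> snd z = {}"
      using canon_succ_lift[of "y k" "y (Suc k)" "fst z" "snd z"] y ok_z unfolding ok_def by blast
    then have "ok (Suc k) (s', snd z \<union> vars_clause (subst_clause \<xi> c))"
      and "step z (s', snd z \<union> vars_clause (subst_clause \<xi> c)) c \<xi> \<theta>"
      using ok_z finite_vars_clause by (simp_all add: ok_def step_def)
    then show ?thesis
      by blast
  qed
  ultimately obtain z where z: "\<And>k. ok k (z k)" "\<And>k. \<exists>c \<xi> \<theta>. step (z k) (z (Suc k)) c \<xi> \<theta>"
    using dependent_nat_choice[of ok "\<lambda>_ z z'. \<exists>c \<xi> \<theta>. step z z' c \<xi> \<theta>"] by blast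
  then obtain cs \<xi>s \<theta>s where steps: "\<And>k. step (z k) (z (Suc k)) (cs k) (\<xi>s k) (\<theta>s k)"
    by metis
  define Gs where "Gs k = snd (fst (z k))" for k
  have z0: "z 0 = ((G, G), vars_goal G)"
    using z(1)[of 0] by (simp add: ok_def)
  have "fst (fst (z k)) = subst_goal (comp_upto \<theta>s k) G" for k
  proof (induction k)
    case (Suc k)
    then show ?case
      using steps[of k] by (simp add: step_def state_step_def subst_goal_comp)
  qed (simp add: z0)
  then have "fst (z k) = (subst_goal (comp_upto \<theta>s k) G, Gs k)" for k
    by (simp add: Gs_def prod_eq_iff)
  then have "variant (y k) (subst_goal (comp_upto \<theta>s k) G, Gs k)" for k
    using z(1)[of k] by (simp add: ok_def)
  moreover have "snd (z k) = vars_goal G \<union> (\<Union>l<k. vars_clause (subst_clause (\<xi>s l) (cs l)))" for k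
  proof (induction k)
    case (Suc k)
    then show ?case
      using steps[of k] by (auto simp: step_def lessThan_Suc)
  qed (simp add: z0)
  then have "inf_sld_deriv P G Gs cs \<xi>s \<theta>s"
    unfolding inf_sld_deriv_def standardised_apart_def
    using z0 steps by (simp add: Gs_def step_def state_step_def)
  ultimately show ?thesis
    by blast
qed

lemma finite_reachable_if_sld_pruned:
  assumes pruned: "\<forall>Gs cs \<xi>s \<theta>s. inf_sld_deriv P G Gs cs \<xi>s \<theta>s \<longrightarrow> evr_pruned G \<theta>s Gs"
  shows "finite {s. canon_succ\<^sup>*\<^sup>* canon_root s}"
proof (rule ccontr)
  assume "infinite {s. canon_succ\<^sup>*\<^sup>* canon_root s}"
  then obtain y where y0: "y 0 = canon_root" and y: "\<forall>k. canon_succ (y k) (y (Suc k))" and "inj y"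
    using koenig_injective[of canon_succ canon_root] finite_canon_succ flat_state_reachable by blast
  obtain Gs cs \<xi>s \<theta>s where "inf_sld_deriv P G Gs cs \<xi>s \<theta>s"
    and y_variant: "\<And>k. variant (y k) (subst_goal (comp_upto \<theta>s k) G, Gs k)"
    using sld_deriv_along_path[OF y0 y] by blast
  then have "evr_pruned G \<theta>s Gs"
    using pruned by blast
  then obtain i j where "i < j"
    and "variant (subst_goal (comp_upto \<theta>s i) G, Gs i) (subst_goal (comp_upto \<theta>s j) G, Gs j)"
    unfolding evr_pruned_iff_variant by blast
  then have "variant (y i) (y j)"
    using y_variant[of i] variant_sym[OF y_variant[of j]] variant_trans by blast
  then have "y i = y j"
    using canon_succ_path_canon[OF y0 y] canon_eq_if_variant[OF inj_var_enum] by metis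
  then show False
    using \<open>i < j\<close> \<open>inj y\<close> by (auto dest: injD)
qed

lemma rsld_pruned_if_finite_reachable:
  assumes fin: "finite {s. canon_succ\<^sup>*\<^sup>* canon_root s}"
    and D: "inf_rsld_deriv P G Gs Ns \<alpha>s cs \<xi>s \<theta>s"
  shows "evr_pruned G \<theta>s Ns"
proof -
  define A where "A k = subst_goal (comp_upto \<theta>s k) G" for k
  obtain M where M: "\<And>k. subseq (Ns k) (M k)" "\<And>k. canon_succ\<^sup>*\<^sup>* canon_root (canon var_enum (A k, M k))"
    using rsld_shadow[OF D] unfolding A_def by blast
  define S where "S = {(B, N). \<exists>H. canon_succ\<^sup>*\<^sup>* canon_root (B, H) \<and> subseq N H}"
  have "S \<subseteq> (\<Union>s\<in>{s. canon_succ\<^sup>*\<^sup>* canon_root s}. {fst s} \<times> set (subseqs (snd s)))"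
    by (force simp: S_def)
  then have "finite S"
    by (rule finite_subset) (use fin in simp)
  have "\<exists>r\<in>S. variant (A k, Ns k) r" for k
  proof -
    obtain f where f: "bij f" "canon var_enum (A k, M k) = rename_state f (A k, M k)"
      using canon_spec(1)[OF inj_var_enum, of "(A k, M k)"] unfolding variant_def by blast
    have "rename_state f (A k, Ns k) \<in> S"
      using M[of k] f(2) subseq_map unfolding S_def rename_state_def subst_goal_def by fastforce
    then show ?thesis
      using variant_rename_state[OF f(1)] by blast
  qed
  then obtain r where r: "\<And>k. r k \<in> S" "\<And>k. variant (A k, Ns k) (r k)"
    by metis
  then have "finite (range r)"
    using \<open>finite S\<close> by (metis finite_subset image_subsetI)
  then obtain i j where "i < j" "r i = r j"
    using finite_range_repeats by blast
  then have "variant (A i, Ns i) (A j, Ns j)"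
    using r(2) variant_sym variant_trans by metis
  then show ?thesis
    using \<open>i < j\<close> unfolding evr_pruned_iff_variant A_def by blast
qed

end

theorem theoremt1p2p1:
  fixes P :: "('p, 'f, 'v) clause set" and G :: "('p, 'f, 'v) goal"
  assumes "infinite (UNIV :: 'v set)"
    and "finite P" and "ff_program P" and "ff_goal G"
    and "\<forall>Gs cs \<xi>s \<theta>s. inf_sld_deriv P G Gs cs \<xi>s \<theta>s \<longrightarrow> evr_pruned G \<theta>s Gs"
  shows "\<forall>Gs Ns \<alpha>s cs \<xi>s \<theta>s. inf_rsld_deriv P G Gs Ns \<alpha>s cs \<xi>s \<theta>s \<longrightarrow> evr_pruned G \<theta>s Ns"
  using rsld_pruned_if_finite_reachable[OF assms(1-4) finite_reachable_if_sld_pruned[OF assms]]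
  by blast

end
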